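(* Every cyclic $\mathrm{STS}(v)$ with $v>7$ admits a zero-sum $4$-flow.
   Context: A Steiner triple system $\mathrm{STS}(v)$ is a pair $(X,\mathcal{B})$ with $|X|=v$ and $\mathcal{B}$ a collection of 3-subsets of $X$ such that every 2-subset lies in exactly one block. It is cyclic if it has an automorphism (a permutation of $X$ mapping blocks to blocks) that is a single cycle of length $v$. For integer $n\ge2$, a zero-sum $n$-flow is a map $f:\mathcal{B}\to\{\pm1,\ldots,\pm(n-1)\}$ with $\sum_{B\ni x} f(B)=0$ for every point $x$. *)

theory Defs
  imports Main
begin

definition is_STS :: "'a set \<Rightarrow> 'a set set \<Rightarrow> bool" where
  "is_STS X Bs \<longleftrightarrow> finite X \<and>
     (\<forall>B\<in>Bs. B \<subseteq> X \<and> card B = 3) \<and>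
     (\<forall>P. P \<subseteq> X \<and> card P = 2 \<longrightarrow> (\<exists>!B. B \<in> Bs \<and> P \<subseteq> B))"

definition is_automorphism :: "'a set \<Rightarrow> 'a set set \<Rightarrow> ('a \<Rightarrow> 'a) \<Rightarrow> bool" where
  "is_automorphism X Bs \<sigma> \<longleftrightarrow> bij_betw \<sigma> X X \<and> (\<forall>B\<in>Bs. \<sigma> ` B \<in> Bs)"

definition is_full_cycle :: "'a set \<Rightarrow> ('a \<Rightarrow> 'a) \<Rightarrow> bool" where
  "is_full_cycle X \<sigma> \<longleftrightarrow> (\<exists>x\<in>X. X = {(\<sigma> ^^ k) x | k. True})"

definition is_cyclic_STS :: "'a set \<Rightarrow> 'a set set \<Rightarrow> bool" where
  "is_cyclic_STS X Bs \<longleftrightarrow> is_STS X Bs \<and>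
     (\<exists>\<sigma>. is_automorphism X Bs \<sigma> \<and> is_full_cycle X \<sigma>)"

definition is_zero_sum_flow :: "nat \<Rightarrow> 'a set \<Rightarrow> 'a set set \<Rightarrow> ('a set \<Rightarrow> int) \<Rightarrow> bool" where
  "is_zero_sum_flow n X Bs f \<longleftrightarrow>
     (\<forall>B\<in>Bs. f B \<noteq> 0 \<and> \<bar>f B\<bar> \<le> int n - 1) \<and>
     (\<forall>x\<in>X. (\<Sum>B\<in>{B\<in>Bs. x \<in> B}. f B) = 0)"

end

theory Submission
  imports Defs
begin

text \<open>The cyclic automorphism acts transitively on the points, so every orbit \<open>Q\<close> of blocks
  covers each point the same number \<open>d\<^sub>Q\<close> of times; counting incidences gives
  \<open>v d\<^sub>Q = 3 |Q| \<le> 3 v\<close>, so \<open>d\<^sub>Q \<in> {1,2,3}\<close>. A flow taking the constant value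
  \<open>c\<^sub>Q\<close> on each orbit sums to \<open>\<Sum> c\<^sub>Q d\<^sub>Q\<close> at every point, so it suffices to choose
  \<open>c\<^sub>Q \<in> {\<plusminus>1,\<plusminus>2,\<plusminus>3}\<close> with that sum zero. The \<open>d\<^sub>Q\<close> add up to the replication
  number \<open>(v - 1)/2 \<ge> 4\<close>, so there are at least two orbits; pairing orbits \<open>P, Q\<close> with
  \<open>c\<^sub>P = d\<^sub>Q, c\<^sub>Q = -d\<^sub>P\<close> and treating a leftover triple separately finishes the proof.\<close>

lemma signed_triple_vanishing:
  fixes a b e :: int
  assumes "a \<in> {1,2,3}" "b \<in> {1,2,3}" "e \<in> {1,2,3}"
  shows "\<exists>x y z. x \<noteq> 0 \<and> \<bar>x\<bar> \<le> 3 \<and> y \<noteq> 0 \<and> \<bar>y\<bar> \<le> 3 \<and> z \<noteq> 0 \<and> \<bar>z\<bar> \<le> 3 \<and>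
    x * a + y * b + z * e = 0"
proof -
  \<comment> \<open>Two equal values, say \<open>a = b\<close>: take \<open>x + y = e\<close> and \<open>z = -a\<close>.
    Three distinct values: they are \<open>1, 2, 3\<close>, and \<open>1 + 2 - 3 = 0\<close>.\<close>
  define s :: "int \<Rightarrow> int" where "s t = (if t = 1 then 2 else 1)" for t
  consider "a = b" | "a = e" | "b = e" | "a \<noteq> b" "a \<noteq> e" "b \<noteq> e"
    by blast
  then show ?thesis
  proof cases
    case 1
    then show ?thesis using assms
      by (intro exI[of _ "s e"] exI[of _ "e - s e"] exI[of _ "- a"]) (auto simp: s_def algebra_simps)
  next
    case 2
    then show ?thesis using assms
      by (intro exI[of _ "s b"] exI[of _ "- a"] exI[of _ "b - s b"]) (auto simp: s_def algebra_simps)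
  next
    case 3
    then show ?thesis using assms
      by (intro exI[of _ "- b"] exI[of _ "s a"] exI[of _ "a - s a"]) (auto simp: s_def algebra_simps)
  next
    case 4
    then show ?thesis using assms
      by (intro exI[of _ "if a = 3 then -1 else 1"] exI[of _ "if b = 3 then -1 else 1"]
          exI[of _ "if e = 3 then -1 else 1"]) auto
  qed
qed

lemma signed_combination_vanishing:
  fixes d :: "'b \<Rightarrow> int"
  assumes "finite S" "card S \<ge> 2" "\<And>Q. Q \<in> S \<Longrightarrow> d Q \<in> {1,2,3}"
  shows "\<exists>c. (\<forall>Q\<in>S. c Q \<noteq> 0 \<and> \<bar>c Q\<bar> \<le> 3) \<and> (\<Sum>Q\<in>S. c Q * d Q) = 0"
  using assms
proof (induction "card S" arbitrary: S rule: less_induct)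
  case less
  consider "card S = 2" | "card S = 3" | "card S \<ge> 4"
    using less.prems(2) by linarith
  then show ?case
  proof cases
    case 1
    then obtain a b where S: "S = {a, b}" "a \<noteq> b" by (meson card_2_iff)
    moreover have "1 \<le> d a" "d a \<le> 3" "1 \<le> d b" "d b \<le> 3"
      using less.prems(3) S by force+
    ultimately show ?thesis
      by (intro exI[of _ "\<lambda>Q. if Q = a then d b else - d a"]) auto
  next
    case 2
    then obtain a b e where S: "S = {a, b, e}" "a \<noteq> b" "a \<noteq> e" "b \<noteq> e"
      by (meson card_3_iff)
    then obtain x y z where "x \<noteq> 0 \<and> \<bar>x\<bar> \<le> 3 \<and> y \<noteq> 0 \<and> \<bar>y\<bar> \<le> 3 \<and> z \<noteq> 0 \<and> \<bar>z\<bar> \<le> 3 \<and>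
        x * d a + y * d b + z * d e = 0"
      using signed_triple_vanishing less.prems(3) by (metis insertCI)
    with S show ?thesis
      by (intro exI[of _ "\<lambda>Q. if Q = a then x else if Q = b then y else z"]) auto
  next
    case 3
    then obtain T where "T \<subseteq> S" "card T = 2"
      using obtain_subset_with_card_n[of 2 S] by force
    then obtain a b where ab: "a \<in> S" "b \<in> S" "a \<noteq> b"
      by (auto simp: card_2_iff)
    let ?S' = "S - {a, b}"
    have "card ?S' = card S - 2"
      using ab less.prems(1) by (simp add: card_Diff_subset)
    then have "\<exists>c. (\<forall>Q\<in>?S'. c Q \<noteq> 0 \<and> \<bar>c Q\<bar> \<le> 3) \<and> (\<Sum>Q\<in>?S'. c Q * d Q) = 0"
      using less.hyps[of ?S'] less.prems 3 by simp
    then obtain c where c: "\<forall>Q\<in>?S'. c Q \<noteq> 0 \<and> \<bar>c Q\<bar> \<le> 3" "(\<Sum>Q\<in>?S'. c Q * d Q) = 0"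
      by blast
    define c' where "c' = c(a := d b, b := - d a)"
    have S: "S = insert a (insert b ?S')" using ab by auto
    have "(\<Sum>Q\<in>S. c' Q * d Q) = c' a * d a + c' b * d b + (\<Sum>Q\<in>?S'. c' Q * d Q)"
      using less.prems(1) ab by (subst S) (simp add: sum.insert)
    also have "(\<Sum>Q\<in>?S'. c' Q * d Q) = (\<Sum>Q\<in>?S'. c Q * d Q)"
      by (rule sum.cong) (auto simp: c'_def)
    finally have "(\<Sum>Q\<in>S. c' Q * d Q) = 0" using ab c(2) by (simp add: c'_def)
    moreover have "\<forall>Q\<in>S. c' Q \<noteq> 0 \<and> \<bar>c' Q\<bar> \<le> 3"
      using c(1) ab less.prems(3) by (force simp: c'_def)
    ultimately show ?thesis by blast
  qed
qed

lemma sum_blocks_through_by_class: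
  fixes h :: "'k \<Rightarrow> int" and cls :: "'a set \<Rightarrow> 'k"
  assumes "finite Bs"
  shows "(\<Sum>B\<in>{B\<in>Bs. y \<in> B}. h (cls B))
    = (\<Sum>Q\<in>cls ` Bs. h Q * int (card {B\<in>Bs. y \<in> B \<and> cls B = Q}))"
proof -
  have "(\<Sum>B\<in>{B\<in>Bs. y \<in> B}. h (cls B))
      = (\<Sum>Q\<in>cls ` Bs. \<Sum>B\<in>{B\<in>{B\<in>Bs. y \<in> B}. cls B = Q}. h (cls B))"
    using assms by (intro sum.group[symmetric]) auto
  also have "\<dots> = (\<Sum>Q\<in>cls ` Bs. h Q * int (card {B\<in>Bs. y \<in> B \<and> cls B = Q}))"
    by (intro sum.cong) (simp_all add: conj_assoc)
  finally show ?thesis .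
qed

lemma zero_sum_4flow_of_regular_classes:
  fixes cls :: "'a set \<Rightarrow> 'k" and d :: "'k \<Rightarrow> int"
  assumes fin: "finite Bs" and x: "x \<in> X" and replication: "card {B\<in>Bs. x \<in> B} > 3"
    and degree: "\<And>Q y. Q \<in> cls ` Bs \<Longrightarrow> y \<in> X \<Longrightarrow> int (card {B\<in>Bs. y \<in> B \<and> cls B = Q}) = d Q"
    and degree_range: "\<And>Q. Q \<in> cls ` Bs \<Longrightarrow> d Q \<in> {1,2,3}"
  shows "\<exists>f. is_zero_sum_flow 4 X Bs f"
proof -
  have sum_blocks_through: "(\<Sum>B\<in>{B\<in>Bs. y \<in> B}. h (cls B)) = (\<Sum>Q\<in>cls ` Bs. h Q * d Q)"
    if "y \<in> X" for y h
    unfolding sum_blocks_through_by_class[OF fin] using degree[OF _ that] by simp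
  have "int (card {B\<in>Bs. x \<in> B}) = (\<Sum>Q\<in>cls ` Bs. d Q)"
    using sum_blocks_through[OF x, of "\<lambda>_. 1"] by simp
  also have "\<dots> \<le> int (card (cls ` Bs)) * 3"
    using degree_range by (intro sum_bounded_above) fastforce
  finally have "card (cls ` Bs) \<ge> 2"
    using replication by linarith
  then obtain c where c: "\<forall>Q\<in>cls ` Bs. c Q \<noteq> 0 \<and> \<bar>c Q\<bar> \<le> 3"
      "(\<Sum>Q\<in>cls ` Bs. c Q * d Q) = 0"
    using signed_combination_vanishing[of "cls ` Bs" d] fin degree_range by blast
  have "is_zero_sum_flow 4 X Bs (c \<circ> cls)"
    unfolding is_zero_sum_flow_def using c sum_blocks_through by auto
  then show ?thesis by blast
qed

lemma STS_finite_points: "is_STS X Bs \<Longrightarrow> finite X"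
  unfolding is_STS_def by (elim conjE)

lemma STS_block: "is_STS X Bs \<Longrightarrow> B \<in> Bs \<Longrightarrow> B \<subseteq> X \<and> card B = 3"
  unfolding is_STS_def by (elim conjE) blast

lemma STS_finite_blocks:
  assumes "is_STS X Bs" shows "finite Bs"
proof -
  have "Bs \<subseteq> Pow X" using STS_block[OF assms] by blast
  then show ?thesis using STS_finite_points[OF assms] by (simp add: finite_subset)
qed

lemma STS_pair_in_unique_block:
  assumes "is_STS X Bs" "x \<in> X" "y \<in> X" "x \<noteq> y"
  shows "\<exists>!B. B \<in> Bs \<and> x \<in> B \<and> y \<in> B"
proof -
  have unique: "\<forall>P. P \<subseteq> X \<and> card P = 2 \<longrightarrow> (\<exists>!B. B \<in> Bs \<and> P \<subseteq> B)"
    using assms(1) unfolding is_STS_def by (elim conjE)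
  have "{x, y} \<subseteq> X \<and> card {x, y} = 2" using assms(2-4) by simp
  from unique[rule_format, OF this] show ?thesis by simp
qed

lemma STS_pair_in_block:
  assumes "is_STS X Bs" "x \<in> X" "y \<in> X" "x \<noteq> y"
  obtains B where "B \<in> Bs" "x \<in> B" "y \<in> B"
  using STS_pair_in_unique_block[OF assms] by (elim ex1E) blast

lemma STS_block_unique:
  assumes "is_STS X Bs" "x \<in> X" "y \<in> X" "x \<noteq> y"
    and "B \<in> Bs" "x \<in> B" "y \<in> B" "C \<in> Bs" "x \<in> C" "y \<in> C"
  shows "B = C"
  using STS_pair_in_unique_block[OF assms(1-4)] assms(5-10) by (elim ex1E) blast

lemma STS_replication:
  assumes sts: "is_STS X Bs" and x: "x \<in> X"
  shows "2 * card {B\<in>Bs. x \<in> B} = card X - 1"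
proof -
  let ?I = "{B\<in>Bs. x \<in> B}"
  have "X - {x} \<subseteq> (\<Union>B\<in>?I. B - {x})"
  proof
    fix y assume y: "y \<in> X - {x}"
    then obtain B where "B \<in> Bs" "x \<in> B" "y \<in> B"
      using STS_pair_in_block[OF sts x] by blast
    then show "y \<in> (\<Union>B\<in>?I. B - {x})" using y by blast
  qed
  then have "X - {x} = (\<Union>B\<in>?I. B - {x})" using STS_block[OF sts] by blast
  moreover have "card (\<Union>B\<in>?I. B - {x}) = (\<Sum>B\<in>?I. card (B - {x}))"
  proof (rule card_UN_disjoint)
    show "finite ?I" using STS_finite_blocks[OF sts] by simp
    show "\<forall>B\<in>?I. finite (B - {x})"
      using STS_block[OF sts] STS_finite_points[OF sts] finite_subset by blast
    show "\<forall>B\<in>?I. \<forall>C\<in>?I. B \<noteq> C \<longrightarrow> (B - {x}) \<inter> (C - {x}) = {}"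
      using STS_block_unique[OF sts x] STS_block[OF sts] by blast
  qed
  moreover have "card (B - {x}) = 2" if "B \<in> ?I" for B
    using STS_block[OF sts] that by (simp add: card_Diff_singleton)
  ultimately have "card (X - {x}) = 2 * card ?I" by simp
  then show ?thesis using x STS_finite_points[OF sts] by (simp add: card_Diff_singleton)
qed

lemma full_cycle_period:
  assumes fin: "finite X" and bij: "bij_betw \<sigma> X X" and cyc: "is_full_cycle X \<sigma>"
  shows "\<exists>p>0. p \<le> card X \<and> (\<forall>y\<in>X. (\<sigma> ^^ p) y = y)"
proof -
  obtain x where x: "x \<in> X" and X: "X = {(\<sigma> ^^ n) x | n. True}"
    using cyc unfolding is_full_cycle_def by blast
  have funpow_in: "(\<sigma> ^^ n) y \<in> X" if "y \<in> X" for n y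
    using bij_betw_funpow[OF bij] that by (meson bij_betwE)
  have "card ((\<lambda>n. (\<sigma> ^^ n) x) ` {..card X}) \<le> card X"
    using fin funpow_in[OF x] by (intro card_mono) auto
  then have "\<not> inj_on (\<lambda>n. (\<sigma> ^^ n) x) {..card X}"
    using card_image by fastforce
  then obtain i j where ij: "i < j" "j \<le> card X" "(\<sigma> ^^ i) x = (\<sigma> ^^ j) x"
    unfolding inj_on_def by (metis atMost_iff linorder_neqE_nat)
  have "(\<sigma> ^^ i) ((\<sigma> ^^ (j - i)) x) = (\<sigma> ^^ i) x"
    using ij by (metis funpow_add comp_apply le_add_diff_inverse order_less_imp_le)
  then have x_fixed: "(\<sigma> ^^ (j - i)) x = x"
    using bij_betw_funpow[OF bij, of i] funpow_in x unfolding bij_betw_def by (meson inj_onD)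
  have "(\<sigma> ^^ (j - i)) y = y" if y: "y \<in> X" for y
  proof -
    obtain n where "y = (\<sigma> ^^ n) x" using y X by blast
    then show ?thesis
      using x_fixed funpow_swap1 by (metis comp_apply funpow_add add.commute)
  qed
  then show ?thesis using ij by (intro exI[of _ "j - i"]) auto
qed

text \<open>The orbit under the powers of \<open>\<sigma>\<close> only; as \<open>\<sigma>\<close> has finite order on the points,
  this is the orbit under the cyclic group it generates.\<close>
definition block_orbit :: "('a \<Rightarrow> 'a) \<Rightarrow> 'a set \<Rightarrow> 'a set set" where
  "block_orbit \<sigma> B = range (\<lambda>n. (\<sigma> ^^ n) ` B)"

definition point_degree :: "'a set set \<Rightarrow> 'a \<Rightarrow> nat" where
  "point_degree \<C> y = card {C\<in>\<C>. y \<in> C}"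

lemma sum_point_degree:
  assumes "finite X" "finite \<C>" "\<And>C. C \<in> \<C> \<Longrightarrow> C \<subseteq> X \<and> card C = k"
  shows "(\<Sum>y\<in>X. point_degree \<C> y) = k * card \<C>"
proof -
  have "(\<Sum>y\<in>X. point_degree \<C> y) = (\<Sum>y\<in>X. \<Sum>C\<in>\<C>. if y \<in> C then 1 else 0)"
    unfolding point_degree_def using assms(2) by (simp add: sum.If_cases Int_def)
  also have "\<dots> = (\<Sum>C\<in>\<C>. \<Sum>y\<in>X. if y \<in> C then 1 else 0)"
    by (rule sum.swap)
  also have "\<dots> = (\<Sum>C\<in>\<C>. k)"
    using assms by (intro sum.cong) (auto simp: sum.If_cases Int_absorb1)
  finally show ?thesis by simp
qed

locale cyclic_design =
  fixes X :: "'a set" and Bs :: "'a set set" and \<sigma> :: "'a \<Rightarrow> 'a" and k :: nat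
  assumes finite_points: "finite X"
    and block_subset: "B \<in> Bs \<Longrightarrow> B \<subseteq> X"
    and card_block: "B \<in> Bs \<Longrightarrow> card B = k"
    and bij: "bij_betw \<sigma> X X"
    and image_block: "B \<in> Bs \<Longrightarrow> \<sigma> ` B \<in> Bs"
    and full_cycle: "is_full_cycle X \<sigma>"
begin

definition period :: nat where
  "period = (SOME p. 0 < p \<and> p \<le> card X \<and> (\<forall>y\<in>X. (\<sigma> ^^ p) y = y))"

lemma period: "0 < period" "period \<le> card X" "y \<in> X \<Longrightarrow> (\<sigma> ^^ period) y = y"
  using someI_ex[OF full_cycle_period[OF finite_points bij full_cycle]]
  unfolding period_def by auto

lemma funpow_in_points: "y \<in> X \<Longrightarrow> (\<sigma> ^^ n) y \<in> X"
  using bij_betw_funpow[OF bij] by (meson bij_betwE)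

lemma funpow_mod_period:
  assumes "y \<in> X" shows "(\<sigma> ^^ n) y = (\<sigma> ^^ (n mod period)) y"
proof -
  have "(\<sigma> ^^ (period * q)) y = y" for q
    by (induction q) (simp_all add: funpow_add period(3) assms)
  moreover have "n = n mod period + period * (n div period)" by simp
  ultimately show ?thesis by (metis comp_apply funpow_add)
qed

lemma funpow_image_mod_period: "B \<subseteq> X \<Longrightarrow> (\<sigma> ^^ n) ` B = (\<sigma> ^^ (n mod period)) ` B"
  using funpow_mod_period by (intro image_cong) auto

lemma funpow_image_block: "B \<in> Bs \<Longrightarrow> (\<sigma> ^^ n) ` B \<in> Bs"
proof (induction n)
  case (Suc n)
  have "(\<sigma> ^^ Suc n) ` B = \<sigma> ` (\<sigma> ^^ n) ` B" by (simp add: image_comp)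
  then show ?case using Suc image_block by simp
qed simp

lemma block_orbit_subset: "B \<in> Bs \<Longrightarrow> block_orbit \<sigma> B \<subseteq> Bs"
  unfolding block_orbit_def using funpow_image_block by auto

lemma block_orbit_eq_image_period:
  assumes "B \<subseteq> X" shows "block_orbit \<sigma> B = (\<lambda>n. (\<sigma> ^^ n) ` B) ` {..<period}"
proof
  show "block_orbit \<sigma> B \<subseteq> (\<lambda>n. (\<sigma> ^^ n) ` B) ` {..<period}"
  proof
    fix C assume "C \<in> block_orbit \<sigma> B"
    then obtain n where "C = (\<sigma> ^^ n) ` B" unfolding block_orbit_def by blast
    then have "C = (\<sigma> ^^ (n mod period)) ` B" "n mod period \<in> {..<period}"
      using funpow_image_mod_period[OF assms] period(1) by simp_all
    then show "C \<in> (\<lambda>n. (\<sigma> ^^ n) ` B) ` {..<period}" by blast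
  qed
qed (auto simp: block_orbit_def)

lemma finite_block_orbit: "B \<subseteq> X \<Longrightarrow> finite (block_orbit \<sigma> B)"
  using block_orbit_eq_image_period by simp

lemma card_block_orbit_le: "B \<subseteq> X \<Longrightarrow> card (block_orbit \<sigma> B) \<le> card X"
  using block_orbit_eq_image_period card_image_le[of "{..<period}"] period(2)
  by (metis card_lessThan finite_lessThan order.trans)

lemma funpow_image_mem_block_orbit: "(\<sigma> ^^ n) ` B \<in> block_orbit \<sigma> B"
  unfolding block_orbit_def by (rule rangeI)

lemma block_orbit_of_member:
  assumes B: "B \<subseteq> X" and C: "C \<in> block_orbit \<sigma> B"
  shows "block_orbit \<sigma> C = block_orbit \<sigma> B"
proof -
  obtain j where j: "C = (\<sigma> ^^ j) ` B" using C unfolding block_orbit_def by blast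
  have shift: "(\<sigma> ^^ n) ` C = (\<sigma> ^^ (n + j)) ` B" for n
    unfolding j funpow_add image_comp ..
  have "(\<sigma> ^^ n) ` B \<in> block_orbit \<sigma> C" for n
  proof -
    \<comment> \<open>\<open>\<sigma> ^^ (period - 1)\<close> inverts \<open>\<sigma>\<close> on the points.\<close>
    have "n + j * (period - 1) + j = n + j * period"
      using period(1) by (cases period) (simp_all add: algebra_simps)
    then have "(n + j * (period - 1) + j) mod period = n mod period"
      by (simp only: mod_mult_self1)
    then have "(\<sigma> ^^ (n + j * (period - 1))) ` C = (\<sigma> ^^ n) ` B"
      unfolding shift using funpow_image_mod_period[OF B] by metis
    then show ?thesis using funpow_image_mem_block_orbit by metis
  qed
  moreover have "(\<sigma> ^^ n) ` C \<in> block_orbit \<sigma> B" for n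
    unfolding shift by (rule funpow_image_mem_block_orbit)
  ultimately show ?thesis unfolding block_orbit_def by blast
qed

lemma image_block_orbit:
  assumes "B \<subseteq> X" shows "image \<sigma> ` block_orbit \<sigma> B = block_orbit \<sigma> B"
proof -
  have "image \<sigma> ` block_orbit \<sigma> B = block_orbit \<sigma> (\<sigma> ` B)"
    unfolding block_orbit_def by (simp add: image_image funpow_swap1)
  also have "\<dots> = block_orbit \<sigma> B"
    using funpow_image_mem_block_orbit[of 1 B] by (intro block_orbit_of_member assms) simp
  finally show ?thesis .
qed

lemma point_degree_block_orbit_image:
  assumes B: "B \<in> Bs" and y: "y \<in> X"
  shows "point_degree (block_orbit \<sigma> B) (\<sigma> y) = point_degree (block_orbit \<sigma> B) y"
proof -
  let ?O = "block_orbit \<sigma> B"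
  have orbit_in_points: "C \<subseteq> X" if "C \<in> ?O" for C
    using block_orbit_subset[OF B] block_subset that by blast
  have inj: "inj_on \<sigma> X" using bij by (rule bij_betw_imp_inj_on)
  have mem_image_iff: "\<sigma> y \<in> \<sigma> ` C \<longleftrightarrow> y \<in> C" if "C \<in> ?O" for C
    using inj_on_image_mem_iff[OF inj y orbit_in_points[OF that]] .
  have "\<Union>?O \<subseteq> X" using orbit_in_points by blast
  then have "inj_on (image \<sigma>) ?O"
    by (rule inj_on_image[OF inj_on_subset[OF inj]])
  then have "inj_on (image \<sigma>) {C\<in>?O. y \<in> C}"
    by (rule inj_on_subset) blast
  moreover have "image \<sigma> ` {C\<in>?O. y \<in> C} = {C\<in>?O. \<sigma> y \<in> C}"
  proof
    show "image \<sigma> ` {C\<in>?O. y \<in> C} \<subseteq> {C\<in>?O. \<sigma> y \<in> C}"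
      using image_block_orbit[OF block_subset[OF B]] by blast
    show "{C\<in>?O. \<sigma> y \<in> C} \<subseteq> image \<sigma> ` {C\<in>?O. y \<in> C}"
    proof
      fix C assume C: "C \<in> {C\<in>?O. \<sigma> y \<in> C}"
      then obtain D where "D \<in> ?O" "C = \<sigma> ` D"
        using image_block_orbit[OF block_subset[OF B]] by (metis (no_types, lifting) imageE mem_Collect_eq)
      then show "C \<in> image \<sigma> ` {C\<in>?O. y \<in> C}"
        using C mem_image_iff by blast
    qed
  qed
  ultimately show ?thesis
    unfolding point_degree_def using card_image by fastforce
qed

lemma point_degree_block_orbit_const:
  assumes B: "B \<in> Bs" and "y \<in> X" "z \<in> X"
  shows "point_degree (block_orbit \<sigma> B) y = point_degree (block_orbit \<sigma> B) z"
proof -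
  obtain x where x: "x \<in> X" and X: "X = {(\<sigma> ^^ n) x | n. True}"
    using full_cycle unfolding is_full_cycle_def by blast
  have "point_degree (block_orbit \<sigma> B) ((\<sigma> ^^ n) x) = point_degree (block_orbit \<sigma> B) x" for n
    by (induction n) (simp_all add: point_degree_block_orbit_image[OF B funpow_in_points[OF x]])
  then show ?thesis using assms(2,3) X by auto
qed

lemma point_degree_block_orbit_bounds:
  assumes B: "B \<in> Bs" and y: "y \<in> X" and "0 < k"
  shows "1 \<le> point_degree (block_orbit \<sigma> B) y" "point_degree (block_orbit \<sigma> B) y \<le> k"
proof -
  let ?O = "block_orbit \<sigma> B" and ?d = "point_degree (block_orbit \<sigma> B) y"
  have eq: "card X * ?d = k * card ?O"
  proof -
    have "(\<Sum>z\<in>X. point_degree ?O z) = card X * ?d"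
      using point_degree_block_orbit_const[OF B _ y] by simp
    moreover have "(\<Sum>z\<in>X. point_degree ?O z) = k * card ?O"
    proof (rule sum_point_degree[OF finite_points finite_block_orbit[OF block_subset[OF B]]])
      fix C assume "C \<in> ?O"
      then have "C \<in> Bs" using block_orbit_subset[OF B] by blast
      then show "C \<subseteq> X \<and> card C = k" using block_subset card_block by blast
    qed
    ultimately show ?thesis by simp
  qed
  have "1 \<le> card ?O" "card ?O \<le> card X"
    using block_subset[OF B] finite_block_orbit card_block_orbit_le
    by (auto simp: Suc_le_eq card_gt_0_iff block_orbit_def)
  then show "1 \<le> ?d"
    using eq \<open>0 < k\<close> by (cases ?d) auto
  have "card X * ?d \<le> card X * k"
    using eq \<open>card ?O \<le> card X\<close> by (simp add: mult.commute)
  then show "?d \<le> k"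
    using finite_points y by (auto simp: card_gt_0_iff)
qed

lemma blocks_with_block_orbit:
  assumes B: "B \<in> Bs"
  shows "{C\<in>Bs. y \<in> C \<and> block_orbit \<sigma> C = block_orbit \<sigma> B} = {C\<in>block_orbit \<sigma> B. y \<in> C}"
proof (intro equalityI subsetI)
  fix C assume "C \<in> {C\<in>Bs. y \<in> C \<and> block_orbit \<sigma> C = block_orbit \<sigma> B}"
  moreover have "C \<in> block_orbit \<sigma> C"
    using funpow_image_mem_block_orbit[of 0 C] by simp
  ultimately show "C \<in> {C\<in>block_orbit \<sigma> B. y \<in> C}" by simp
next
  fix C assume C: "C \<in> {C\<in>block_orbit \<sigma> B. y \<in> C}"
  then have "C \<in> Bs" using block_orbit_subset[OF B] by blast
  moreover have "block_orbit \<sigma> C = block_orbit \<sigma> B"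
    using C block_orbit_of_member[OF block_subset[OF B]] by blast
  ultimately show "C \<in> {C\<in>Bs. y \<in> C \<and> block_orbit \<sigma> C = block_orbit \<sigma> B}" using C by blast
qed

end

theorem mainTheorem7:
  fixes X :: "'a set" and Bs :: "'a set set"
  assumes "is_cyclic_STS X Bs" and "card X > 7"
  shows "\<exists>f. is_zero_sum_flow 4 X Bs f"
proof -
  obtain \<sigma> where sts: "is_STS X Bs" and aut: "is_automorphism X Bs \<sigma>" and cyc: "is_full_cycle X \<sigma>"
    using assms(1) unfolding is_cyclic_STS_def by blast
  interpret cyclic_design X Bs \<sigma> 3
    using STS_finite_points[OF sts] STS_block[OF sts] aut cyc
    by unfold_locales (auto simp: is_automorphism_def)
  obtain x where x: "x \<in> X"
    using cyc unfolding is_full_cycle_def by blast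
  have replication: "card {B\<in>Bs. x \<in> B} > 3"
    using STS_replication[OF sts x] assms(2) by linarith
  have degree: "int (card {C\<in>Bs. y \<in> C \<and> block_orbit \<sigma> C = Q}) = int (point_degree Q x)"
    if Q: "Q \<in> block_orbit \<sigma> ` Bs" and y: "y \<in> X" for Q y
  proof -
    obtain B where B: "B \<in> Bs" "Q = block_orbit \<sigma> B" using Q by blast
    show ?thesis
      unfolding B(2) blocks_with_block_orbit[OF B(1)] point_degree_def[symmetric]
      using point_degree_block_orbit_const[OF B(1) y x] by simp
  qed
  have degree_range: "int (point_degree Q x) \<in> {1,2,3}" if Q: "Q \<in> block_orbit \<sigma> ` Bs" for Q
  proof -
    obtain B where B: "B \<in> Bs" "Q = block_orbit \<sigma> B" using Q by blast
    show ?thesis using point_degree_block_orbit_bounds[OF B(1) x] B(2) by fastforce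
  qed
  show ?thesis
    using zero_sum_4flow_of_regular_classes[OF STS_finite_blocks[OF sts] x replication degree degree_range] .
qed

end
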